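(* Let $G$ be a median graph with $n\ge 3$ vertices in $\mathcal{U}_3$, and let $v_0$ be its unique vertex lying in every majority halfspace. Let $L$ be a nonempty pairwise orthogonal family of $\Theta$-classes each of which contains an edge incident to $v_0$, and let $V_L=\{v\in V(G)\setminus\{v_0\}: L_{v_0,v}=L\}$. Then $V_L$ is nonempty and gated.
   Context: Graphs are finite, simple, connected, undirected; $d$ is shortest-path distance; $I(u,v)=\{x:d(u,x)+d(x,v)=d(u,v)\}$; a graph is median if every triple $x,y,z$ has $|I(x,y)\cap I(y,z)\cap I(z,x)|=1$. A vertex set $H$ is gated if each vertex $v$ has a vertex $g_H(v)\in H$ with $g_H(v)\in I(v,x)$ for all $x\in H$. $\Theta$-classes: classes of the reflexive–transitive closure of the relation on edges "opposite edges of a 4-cycle"; deleting a $\Theta$-class $E_i$ of a median graph leaves two components with vertex sets (halfspaces) $H_i',H_i''$. $\mathcal{U}_3$ is the family of median graphs with $n$ vertices in which every $\Theta$-class satisfies $\min\{|H_i'|,|H_i''|\}<n/3$; the larger halfspace is the majority halfspace. Two $\Theta$-classes $E_i,E_j$ are orthogonal if there is a 4-cycle $uvyx$ with $uv,xy\in E_i$ and $ux,vy\in E_j$; a pairwise orthogonal family (POF) is a set of pairwise orthogonal $\Theta$-classes. For $u\ne v$, the ladder set $L_{u,v}$ is the set of $\Theta$-classes $E_i$ such that $u,v$ lie in different halfspaces of $E_i$ and $u$ is an endpoint of an edge of $E_i$. *)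

theory Defs
  imports Main
begin

definition simple_graph :: "'a set \<Rightarrow> ('a \<Rightarrow> 'a \<Rightarrow> bool) \<Rightarrow> bool" where
  "simple_graph V E \<longleftrightarrow> finite V \<and> V \<noteq> {} \<and>
     (\<forall>u v. E u v \<longrightarrow> u \<in> V \<and> v \<in> V) \<and>
     (\<forall>u v. E u v \<longrightarrow> E v u) \<and> (\<forall>u. \<not> E u u)"

definition graph_connected :: "'a set \<Rightarrow> ('a \<Rightarrow> 'a \<Rightarrow> bool) \<Rightarrow> bool" where
  "graph_connected V E \<longleftrightarrow> (\<forall>u\<in>V. \<forall>v\<in>V. E\<^sup>*\<^sup>* u v)"

fun is_walk :: "('a \<Rightarrow> 'a \<Rightarrow> bool) \<Rightarrow> 'a list \<Rightarrow> bool" where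
  "is_walk E [] = False"
| "is_walk E [x] = True"
| "is_walk E (x # y # xs) = (E x y \<and> is_walk E (y # xs))"

definition dist :: "('a \<Rightarrow> 'a \<Rightarrow> bool) \<Rightarrow> 'a \<Rightarrow> 'a \<Rightarrow> nat" where
  "dist E u v = (LEAST n. \<exists>xs. is_walk E xs \<and> hd xs = u \<and> last xs = v \<and> length xs = Suc n)"

definition interval :: "'a set \<Rightarrow> ('a \<Rightarrow> 'a \<Rightarrow> bool) \<Rightarrow> 'a \<Rightarrow> 'a \<Rightarrow> 'a set" where
  "interval V E u v = {x \<in> V. dist E u x + dist E x v = dist E u v}"

definition median_graph :: "'a set \<Rightarrow> ('a \<Rightarrow> 'a \<Rightarrow> bool) \<Rightarrow> bool" where
  "median_graph V E \<longleftrightarrow> simple_graph V E \<and> graph_connected V E \<and>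
     (\<forall>x\<in>V. \<forall>y\<in>V. \<forall>z\<in>V.
        card (interval V E x y \<inter> interval V E y z \<inter> interval V E z x) = 1)"

definition gated :: "'a set \<Rightarrow> ('a \<Rightarrow> 'a \<Rightarrow> bool) \<Rightarrow> 'a set \<Rightarrow> bool" where
  "gated V E H \<longleftrightarrow> (\<forall>v\<in>V. \<exists>g\<in>H. \<forall>x\<in>H. g \<in> interval V E v x)"

definition edges :: "('a \<Rightarrow> 'a \<Rightarrow> bool) \<Rightarrow> 'a set set" where
  "edges E = {{u, v} | u v. E u v}"

definition four_cycle :: "('a \<Rightarrow> 'a \<Rightarrow> bool) \<Rightarrow> 'a \<Rightarrow> 'a \<Rightarrow> 'a \<Rightarrow> 'a \<Rightarrow> bool" where
  "four_cycle E u v y x \<longleftrightarrow> E u v \<and> E v y \<and> E y x \<and> E x u \<and> u \<noteq> y \<and> v \<noteq> x"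

definition opp_rel :: "('a \<Rightarrow> 'a \<Rightarrow> bool) \<Rightarrow> ('a set \<times> 'a set) set" where
  "opp_rel E = {({u, v}, {x, y}) | u v x y. four_cycle E u v y x}"

definition theta :: "('a \<Rightarrow> 'a \<Rightarrow> bool) \<Rightarrow> ('a set \<times> 'a set) set" where
  "theta E = {(e, f). e \<in> edges E \<and> f \<in> edges E \<and> (e, f) \<in> (opp_rel E)\<^sup>*}"

definition theta_classes :: "('a \<Rightarrow> 'a \<Rightarrow> bool) \<Rightarrow> 'a set set set" where
  "theta_classes E = edges E // theta E"

definition del_class :: "('a \<Rightarrow> 'a \<Rightarrow> bool) \<Rightarrow> 'a set set \<Rightarrow> 'a \<Rightarrow> 'a \<Rightarrow> bool" where
  "del_class E F u v \<longleftrightarrow> E u v \<and> {u, v} \<notin> F"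

definition halfspaces :: "'a set \<Rightarrow> ('a \<Rightarrow> 'a \<Rightarrow> bool) \<Rightarrow> 'a set set \<Rightarrow> 'a set set" where
  "halfspaces V E F = {{v \<in> V. (del_class E F)\<^sup>*\<^sup>* u v} | u. u \<in> V}"

definition in_U3 :: "'a set \<Rightarrow> ('a \<Rightarrow> 'a \<Rightarrow> bool) \<Rightarrow> bool" where
  "in_U3 V E \<longleftrightarrow> median_graph V E \<and>
     (\<forall>F\<in>theta_classes E. \<exists>H\<in>halfspaces V E F. 3 * card H < card V)"

definition majority_halfspace :: "'a set \<Rightarrow> ('a \<Rightarrow> 'a \<Rightarrow> bool) \<Rightarrow> 'a set set \<Rightarrow> 'a set \<Rightarrow> bool" where
  "majority_halfspace V E F H \<longleftrightarrow> H \<in> halfspaces V E F \<and>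
     (\<forall>H'\<in>halfspaces V E F. H' \<noteq> H \<longrightarrow> card H' < card H)"

definition orthogonal :: "('a \<Rightarrow> 'a \<Rightarrow> bool) \<Rightarrow> 'a set set \<Rightarrow> 'a set set \<Rightarrow> bool" where
  "orthogonal E F1 F2 \<longleftrightarrow> (\<exists>u v y x. four_cycle E u v y x \<and>
     {u, v} \<in> F1 \<and> {x, y} \<in> F1 \<and> {u, x} \<in> F2 \<and> {v, y} \<in> F2)"

definition POF :: "('a \<Rightarrow> 'a \<Rightarrow> bool) \<Rightarrow> 'a set set set \<Rightarrow> bool" where
  "POF E L \<longleftrightarrow> L \<subseteq> theta_classes E \<and>
     (\<forall>F1\<in>L. \<forall>F2\<in>L. F1 \<noteq> F2 \<longrightarrow> orthogonal E F1 F2)"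

definition separates :: "'a set \<Rightarrow> ('a \<Rightarrow> 'a \<Rightarrow> bool) \<Rightarrow> 'a set set \<Rightarrow> 'a \<Rightarrow> 'a \<Rightarrow> bool" where
  "separates V E F u v \<longleftrightarrow> (\<exists>H1\<in>halfspaces V E F. \<exists>H2\<in>halfspaces V E F.
      H1 \<noteq> H2 \<and> u \<in> H1 \<and> v \<in> H2)"

definition ladder_set :: "'a set \<Rightarrow> ('a \<Rightarrow> 'a \<Rightarrow> bool) \<Rightarrow> 'a \<Rightarrow> 'a \<Rightarrow> 'a set set set" where
  "ladder_set V E u v = {F \<in> theta_classes E. separates V E F u v \<and> (\<exists>e\<in>F. u \<in> e)}"

end

theory Submission
  imports Defs
begin

text \<open>
  In a median graph the \<Theta>-class of an edge uv consists of the edges between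
  W u v = {x. d x u < d x v} and W v u, and these two sets are its halfspaces; both are
  convex (Djokovic--Winkler). Hence, for any vertex v0, V_L is the set of vertices lying
  in W w v0 exactly for those neighbours w of v0 whose class belongs to L: an intersection
  of convex sets, so convex, so gated. For non-emptiness, start at v0 and add the
  neighbours w one at a time, each time moving to the gate in W w v0; the squares at v0
  supplied by orthogonality keep the earlier choices intact.
\<close>

lemma walk_iff_relpowp:
  "(\<exists>xs. is_walk E xs \<and> hd xs = u \<and> last xs = v \<and> length xs = Suc n) \<longleftrightarrow> (E ^^ n) u v"
proof (induction n arbitrary: u)
  case 0
  show ?case
  proof
    assume "\<exists>xs. is_walk E xs \<and> hd xs = u \<and> last xs = v \<and> length xs = Suc 0"
    then obtain xs where "hd xs = u" "last xs = v" "length xs = Suc 0" by blast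
    then show "(E ^^ 0) u v" by (cases xs) auto
  next
    assume "(E ^^ 0) u v"
    then show "\<exists>xs. is_walk E xs \<and> hd xs = u \<and> last xs = v \<and> length xs = Suc 0"
      by (intro exI[of _ "[u]"]) auto
  qed
next
  case (Suc n)
  show ?case
  proof
    assume "\<exists>xs. is_walk E xs \<and> hd xs = u \<and> last xs = v \<and> length xs = Suc (Suc n)"
    then obtain xs where xs: "is_walk E xs" "hd xs = u" "last xs = v" "length xs = Suc (Suc n)"
      by blast
    then obtain y ys where "xs = u # y # ys" by (cases xs; cases "tl xs") auto
    with xs have "E u y" "is_walk E (y # ys)" "last (y # ys) = v" "length (y # ys) = Suc n"
      by auto
    then have "(E ^^ n) y v" using Suc.IH[of y] by (metis list.sel(1))
    with \<open>E u y\<close> show "(E ^^ Suc n) u v" by (rule relpowp_Suc_I2)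
  next
    assume "(E ^^ Suc n) u v"
    then obtain y where "E u y" "(E ^^ n) y v" by (rule relpowp_Suc_E2)
    then obtain xs where xs: "is_walk E xs" "hd xs = y" "last xs = v" "length xs = Suc n"
      using Suc.IH[of y] by blast
    then obtain zs where "xs = y # zs" by (cases xs) auto
    with xs \<open>E u y\<close>
    show "\<exists>xs. is_walk E xs \<and> hd xs = u \<and> last xs = v \<and> length xs = Suc (Suc n)"
      by (intro exI[of _ "u # xs"]) auto
  qed
qed

lemma dist_eq_Least_relpowp: "dist E u v = (LEAST n. (E ^^ n) u v)"
  unfolding dist_def walk_iff_relpowp ..

lemma relpowp_sym:
  assumes "symp E" and "(E ^^ n) u v"
  shows "(E ^^ n) v u"
  using assms(2)
proof (induction n arbitrary: u v)
  case 0
  then show ?case by auto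
next
  case (Suc n)
  then obtain y where "(E ^^ n) u y" "E y v" by (blast elim: relpowp_Suc_E)
  then show ?case using Suc.IH assms(1) by (meson relpowp_Suc_I2 sympD)
qed

locale median =
  fixes V :: "'a set" and E :: "'a \<Rightarrow> 'a \<Rightarrow> bool"
  assumes median_graph: "median_graph V E"
begin

abbreviation d where "d \<equiv> dist E"
abbreviation I where "I \<equiv> interval V E"

lemma simple_graph: "simple_graph V E"
  using median_graph unfolding median_graph_def by auto

lemma edge_in_V: "E u v \<Longrightarrow> u \<in> V \<and> v \<in> V"
  using simple_graph unfolding simple_graph_def by auto

lemma edge_sym: "E u v \<Longrightarrow> E v u"
  using simple_graph unfolding simple_graph_def by auto

lemma edge_irrefl: "\<not> E u u"
  using simple_graph unfolding simple_graph_def by auto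

lemma finite_V: "finite V"
  using simple_graph unfolding simple_graph_def by auto

lemma relpowp_dist: "u \<in> V \<Longrightarrow> v \<in> V \<Longrightarrow> (E ^^ d u v) u v"
proof -
  assume "u \<in> V" "v \<in> V"
  then have "E\<^sup>*\<^sup>* u v" using median_graph unfolding median_graph_def graph_connected_def by auto
  then obtain n where "(E ^^ n) u v" using rtranclp_imp_relpowp by metis
  then show ?thesis unfolding dist_eq_Least_relpowp by (rule LeastI)
qed

lemma dist_le_relpowp: "(E ^^ n) u v \<Longrightarrow> d u v \<le> n"
  unfolding dist_eq_Least_relpowp by (rule Least_le)

lemma dist_self [simp]: "d u u = 0"
  using dist_le_relpowp[of 0 u u] by simp

lemma dist_eq_0_imp_eq: "u \<in> V \<Longrightarrow> v \<in> V \<Longrightarrow> d u v = 0 \<Longrightarrow> u = v"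
  using relpowp_dist[of u v] by simp

lemma dist_sym: "d u v = d v u"
proof -
  have "symp E" using edge_sym by (rule sympI)
  then show ?thesis unfolding dist_eq_Least_relpowp by (metis relpowp_sym)
qed

lemma dist_triangle: "u \<in> V \<Longrightarrow> v \<in> V \<Longrightarrow> w \<in> V \<Longrightarrow> d u w \<le> d u v + d v w"
  using relpowp_dist[of u v] relpowp_dist[of v w] dist_le_relpowp relpowp_trans by metis

lemma dist_edge: "E u v \<Longrightarrow> d u v = 1"
proof -
  assume e: "E u v"
  then have "d u v \<le> 1" using dist_le_relpowp[of 1 u v] by (simp add: OO_def)
  moreover have "d u v \<noteq> 0" using dist_eq_0_imp_eq edge_in_V edge_irrefl e by metis
  ultimately show ?thesis by simp
qed

lemma edge_if_dist_1: "u \<in> V \<Longrightarrow> v \<in> V \<Longrightarrow> d u v = 1 \<Longrightarrow> E u v"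
  using relpowp_dist[of u v] by (simp add: OO_def)

lemma dist_neighbour_le: "E u w \<Longrightarrow> x \<in> V \<Longrightarrow> d x w \<le> d x u + 1"
  using dist_triangle[of x u w] edge_in_V[of u w] dist_edge[of u w] by simp

lemma exists_neighbour_closer:
  assumes "u \<in> V" "v \<in> V" "u \<noteq> v"
  obtains w where "E u w" "d w v + 1 = d u v"
proof -
  obtain k where k: "d u v = Suc k" using dist_eq_0_imp_eq assms by (cases "d u v") auto
  then have "(E ^^ Suc k) u v" using relpowp_dist[OF assms(1,2)] by simp
  then obtain w where w: "E u w" "(E ^^ k) w v" by (rule relpowp_Suc_E2)
  have "d u v \<le> d u w + d w v" using dist_triangle assms edge_in_V w(1) by blast
  then have "d w v + 1 = d u v" using dist_le_relpowp[OF w(2)] dist_edge[OF w(1)] k by simp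
  with w(1) show thesis by (rule that)
qed

lemma in_interval_iff: "z \<in> I x y \<longleftrightarrow> z \<in> V \<and> d x z + d z y = d x y"
  unfolding interval_def by auto

lemma median_triple_eq:
  assumes "x \<in> V" "y \<in> V" "z \<in> V"
  obtains m where "I x y \<inter> I y z \<inter> I z x = {m}"
proof -
  have "card (I x y \<inter> I y z \<inter> I z x) = Suc 0"
    using median_graph assms unfolding median_graph_def by auto
  then show thesis using that by (auto simp: card_Suc_eq)
qed

lemma median_exists:
  assumes "x \<in> V" "y \<in> V" "z \<in> V"
  obtains m where "m \<in> I x y" "m \<in> I y z" "m \<in> I z x"
proof -
  obtain m where "I x y \<inter> I y z \<inter> I z x = {m}" using median_triple_eq[OF assms] .
  then show thesis using that by blast
qed

lemma median_unique:
  assumes "x \<in> V" "y \<in> V" "z \<in> V"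
    and "a \<in> I x y" "a \<in> I y z" "a \<in> I z x"
    and "b \<in> I x y" "b \<in> I y z" "b \<in> I z x"
  shows "a = b"
proof -
  obtain m where "I x y \<inter> I y z \<inter> I z x = {m}" using median_triple_eq[OF assms(1-3)] .
  then have "a = m" "b = m" using assms(4-) by blast+
  then show ?thesis by simp
qed

lemma dist_neighbours_ne: "E u v \<Longrightarrow> x \<in> V \<Longrightarrow> d x u \<noteq> d x v"
proof
  assume e: "E u v" and x: "x \<in> V" and eq: "d x u = d x v"
  have uv: "u \<in> V" "v \<in> V" using edge_in_V e by auto
  obtain m where m: "m \<in> I x u" "m \<in> I u v" "m \<in> I v x" using median_exists[OF x uv] .
  have mV: "m \<in> V" using m in_interval_iff by auto
  from m(2) have "d u m = 0 \<or> d m v = 0" using dist_edge[OF e] in_interval_iff by auto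
  then show False
  proof
    assume "d u m = 0"
    then have "m = u" using dist_eq_0_imp_eq uv mV by metis
    then have "d v u + d u x = d v x" using m(3) in_interval_iff by auto
    then show False using eq dist_edge[OF e] dist_sym[of v u] dist_sym[of u x] dist_sym[of v x] by linarith
  next
    assume "d m v = 0"
    then have "m = v" using dist_eq_0_imp_eq uv mV by metis
    then have "d x v + d v u = d x u" using m(1) in_interval_iff by auto
    then show False using eq dist_edge[OF e] dist_sym[of v u] by linarith
  qed
qed

lemma dist_neighbours_cases: "E u v \<Longrightarrow> x \<in> V \<Longrightarrow> d x v = d x u + 1 \<or> d x u = d x v + 1"
  using dist_neighbours_ne[of u v x] dist_neighbour_le[of u v x] dist_neighbour_le[of v u x] edge_sym
  by fastforce

lemma dist_2_if_path:
  assumes "E a c" "E c b" "a \<noteq> b" "\<not> E a b"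
  shows "d a b = 2"
proof -
  have V: "a \<in> V" "b \<in> V" "c \<in> V" using edge_in_V assms by auto
  have "d a b \<le> 2" using dist_triangle[OF V(1,3,2)] dist_edge assms by simp
  moreover have "d a b \<noteq> 0" using dist_eq_0_imp_eq V assms by blast
  moreover have "d a b \<noteq> 1" using edge_if_dist_1 V assms by blast
  ultimately show ?thesis by simp
qed

definition W :: "'a \<Rightarrow> 'a \<Rightarrow> 'a set" where
  "W u v = {x \<in> V. d x u < d x v}"

lemma W_subset: "W u v \<subseteq> V"
  unfolding W_def by auto

lemma W_cases: "E u v \<Longrightarrow> x \<in> V \<Longrightarrow> x \<in> W u v \<or> x \<in> W v u"
  unfolding W_def using dist_neighbours_ne by fastforce

lemma W_disjoint: "x \<in> W u v \<Longrightarrow> x \<notin> W v u"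
  unfolding W_def by auto

lemma W_self: "E u v \<Longrightarrow> u \<in> W u v"
  unfolding W_def using dist_edge edge_in_V by auto

lemma W_swap: "E u v \<Longrightarrow> W v u = V - W u v"
  using W_cases W_disjoint W_subset by blast

lemma W_if_neighbour: "E a b \<Longrightarrow> E q a \<Longrightarrow> q \<noteq> b \<Longrightarrow> q \<in> W a b"
proof -
  assume e: "E a b" "E q a" "q \<noteq> b"
  have V: "q \<in> V" "a \<in> V" "b \<in> V" using edge_in_V e by auto
  have "d q b \<noteq> d q a" "d q b \<noteq> 0" using dist_neighbours_ne[OF e(1) V(1)] dist_eq_0_imp_eq V e(3) by auto
  then show ?thesis unfolding W_def using V dist_edge[OF e(2)] by auto
qed

lemma W_square_subset:
  assumes c: "four_cycle E u v y x"
  shows "W u v \<subseteq> W x y"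
proof
  fix z assume z: "z \<in> W u v"
  have e: "E u v" "E v y" "E y x" "E x u" "u \<noteq> y" "v \<noteq> x"
    using c unfolding four_cycle_def by auto
  have V: "u \<in> V" "v \<in> V" "x \<in> V" "y \<in> V" using edge_in_V e by auto
  have zV: "z \<in> V" using z W_subset by auto
  define k where "k = d z u"
  have zv: "d z v = k + 1" using z dist_neighbours_cases[OF e(1) zV] unfolding W_def k_def by auto
  show "z \<in> W x y"
  proof (rule ccontr)
    assume "z \<notin> W x y"
    then have "d z x = d z y + 1" using dist_neighbours_cases[OF e(3) zV] zV unfolding W_def by auto
    moreover have "d z x = k + 1 \<or> k = d z x + 1" using dist_neighbours_cases[OF e(4) zV] k_def by auto
    moreover have "d z y = k + 2 \<or> k + 1 = d z y + 1" using dist_neighbours_cases[OF e(2) zV] zv by auto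
    ultimately have zx: "d z x = k + 1" and zy: "d z y = k" by auto
    have "\<not> E v x"
      using dist_neighbours_ne[OF edge_sym[OF e(4)] V(2)] dist_edge[OF e(1)] dist_edge dist_sym by metis
    then have dvx: "d v x = 2" using dist_2_if_path[OF edge_sym[OF e(1)] edge_sym[OF e(4)] e(6)] by blast
    \<comment> \<open>both u and y would be medians of z, v, x\<close>
    have "u \<in> I z v" "u \<in> I v x" "u \<in> I x z"
      using V zV zv dvx dist_edge[OF e(1)] dist_edge[OF edge_sym[OF e(4)]] dist_edge[OF e(4)] k_def zx
      unfolding in_interval_iff by (auto simp: dist_sym)
    moreover have "y \<in> I z v" "y \<in> I v x" "y \<in> I x z"
      using V zV zv dvx dist_edge[OF e(2)] dist_edge[OF e(3)] dist_edge[OF edge_sym[OF e(3)]] zy zx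
      unfolding in_interval_iff by (auto simp: dist_sym)
    ultimately have "u = y" using median_unique[OF zV V(2) V(3)] by blast
    then show False using e by simp
  qed
qed

lemma four_cycle_rotate: "four_cycle E u v y x \<Longrightarrow> four_cycle E x y v u"
  unfolding four_cycle_def using edge_sym by blast

lemma W_square_eq: "four_cycle E u v y x \<Longrightarrow> W u v = W x y"
  using W_square_subset four_cycle_rotate by blast

lemma quadrangle:
  assumes z: "z \<in> V" and e: "E a c" "E b c" "a \<noteq> b"
    and dist: "d z a = k" "d z b = k" "d z c = k + 1"
  obtains w where "E a w" "E b w" "d z w + 1 = k"
proof -
  have V: "a \<in> V" "b \<in> V" "c \<in> V" using edge_in_V e by auto
  have "\<not> E a b" using dist_neighbours_ne[OF _ z] dist by metis
  then have dab: "d a b = 2" using dist_2_if_path[OF e(1) edge_sym[OF e(2)] e(3)] by blast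
  obtain m where m: "m \<in> I z a" "m \<in> I a b" "m \<in> I b z" using median_exists[OF z V(1,2)] .
  have mV: "m \<in> V" using m in_interval_iff by auto
  have s: "d a m + d m b = 2" using m(2) dab in_interval_iff by auto
  have "m \<noteq> a"
  proof
    assume "m = a"
    then have "d b a + d a z = d b z" using m(3) in_interval_iff by auto
    then show False using dab dist dist_sym[of a z] dist_sym[of b a] dist_sym[of b z] by linarith
  qed
  then have "d a m \<noteq> 0" using dist_eq_0_imp_eq mV V by metis
  moreover have "m \<noteq> b"
  proof
    assume "m = b"
    then have "d z b + d b a = d z a" using m(1) in_interval_iff by auto
    then show False using dab dist dist_sym[of b a] by linarith
  qed
  then have "d m b \<noteq> 0" using dist_eq_0_imp_eq mV V by metis
  ultimately have "d a m = 1" "d m b = 1" using s by auto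
  then have "E a m" "E b m" using edge_if_dist_1 V mV dist_sym by metis+
  moreover have "d z m + 1 = k" using m(1) \<open>d a m = 1\<close> dist dist_sym[of a m] in_interval_iff by auto
  ultimately show thesis by (rule that)
qed

lemma crossing_edge_step:
  assumes uv: "E u v" and xz: "E x z" "x \<in> W u v" "z \<in> W v u" and "x \<noteq> u"
  obtains x' w where "four_cycle E x z w x'" "x' \<in> W u v" "w \<in> W v u" "d x' u + 1 = d x u"
proof -
  have V: "x \<in> V" "z \<in> V" "u \<in> V" "v \<in> V" using edge_in_V xz(1) uv by auto
  obtain n where xu: "d x u = Suc n" using dist_eq_0_imp_eq V \<open>x \<noteq> u\<close> by (cases "d x u") auto
  have xv: "d x v = Suc n + 1"
    using xu xz(2) dist_neighbours_cases[OF uv V(1)] unfolding W_def by auto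
  have "d z u = d z v + 1"
    using xz(3) dist_neighbours_cases[OF uv V(2)] unfolding W_def by auto
  moreover have "d v z = d v x + 1 \<or> d v x = d v z + 1" "d u z = d u x + 1 \<or> d u x = d u z + 1"
    using dist_neighbours_cases[OF xz(1)] V by auto
  ultimately have zv: "d z v = Suc n" and zu: "d z u = Suc n + 1"
    using xv xu dist_sym[of v z] dist_sym[of v x] dist_sym[of u z] dist_sym[of u x]
    by linarith+
  \<comment> \<open>step from x towards u; the quadrangle condition at v supplies the opposite edge x' w\<close>
  obtain x' where x': "E x x'" "d x' u + 1 = d x u"
    using exists_neighbour_closer[OF V(1,3) \<open>x \<noteq> u\<close>] by blast
  have x'V: "x' \<in> V" using edge_in_V x' by auto
  have x'u: "d x' u = n" using x' xu by simp
  have "d x' v \<le> Suc n" using dist_triangle[OF x'V V(3,4)] x'u dist_edge[OF uv] by simp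
  moreover have "d v x' = d v x + 1 \<or> d v x = d v x' + 1"
    using dist_neighbours_cases[OF x'(1) V(4)] .
  ultimately have x'v: "d x' v = Suc n" using xv dist_sym[of v x'] dist_sym[of v x] by linarith
  have "x' \<noteq> z" using x'u zu by auto
  moreover have "d v x' = Suc n" "d v z = Suc n" "d v x = Suc n + 1"
    using x'v zv xv dist_sym by auto
  ultimately obtain w where w: "E x' w" "E z w" "d v w + 1 = Suc n"
    using quadrangle[OF V(4) edge_sym[OF x'(1)] edge_sym[OF xz(1)]] by metis
  have wV: "w \<in> V" using edge_in_V w by auto
  have wv: "d w v = n" using w(3) dist_sym by simp
  have "d w u \<le> Suc n" using dist_triangle[OF wV x'V V(3)] x'u dist_edge[OF edge_sym[OF w(1)]] by simp
  moreover have "d u w = d u z + 1 \<or> d u z = d u w + 1"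
    using dist_neighbours_cases[OF w(2) V(3)] .
  ultimately have wu: "d w u = Suc n" using zu dist_sym[of u w] dist_sym[of u z] by linarith
  have "x \<noteq> w" using xv wv by auto
  then have "four_cycle E x z w x'"
    unfolding four_cycle_def using xz(1) w edge_sym x' \<open>x' \<noteq> z\<close> by blast
  moreover have "x' \<in> W u v" "w \<in> W v u" using x'u x'v x'V wu wv wV unfolding W_def by auto
  ultimately show thesis using that x'(2) by blast
qed

lemma crossing_edge:
  assumes uv: "E u v" and xz: "E x z" "x \<in> W u v" "z \<in> W v u"
  shows "W x z = W u v \<and> ({x, z}, {u, v}) \<in> (opp_rel E)\<^sup>*"
  using xz
proof (induction "d x u" arbitrary: x z)
  case 0
  have V: "x \<in> V" "z \<in> V" "u \<in> V" "v \<in> V" using edge_in_V 0 uv by auto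
  have "x = u" using dist_eq_0_imp_eq "0" V by metis
  have "d z u = d z v + 1" using "0.prems"(3) dist_neighbours_cases[OF uv V(2)] unfolding W_def by auto
  moreover have "d z u \<le> 1"
    using dist_neighbour_le[OF "0.prems"(1) V(3)] "0.hyps" dist_sym[of u z] dist_sym[of u x] by simp
  ultimately have "z = v" using dist_eq_0_imp_eq V by simp
  then show ?case using \<open>x = u\<close> by simp
next
  case (Suc n)
  then have "x \<noteq> u" by (metis dist_self nat.distinct(1))
  then obtain x' w where c: "four_cycle E x z w x'" and xw: "x' \<in> W u v" "w \<in> W v u" "d x' u + 1 = d x u"
    using crossing_edge_step[OF uv Suc.prems] by blast
  have "E x' w" using c edge_sym unfolding four_cycle_def by blast
  then have IH: "W x' w = W u v \<and> ({x', w}, {u, v}) \<in> (opp_rel E)\<^sup>*"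
    using Suc.hyps xw by simp
  have "({x, z}, {x', w}) \<in> opp_rel E" using c unfolding opp_rel_def by blast
  then show ?case using IH W_square_eq[OF c] by (metis converse_rtrancl_into_rtrancl)
qed

definition edge_class :: "'a \<Rightarrow> 'a \<Rightarrow> 'a set set" where
  "edge_class u v = {{x, y} | x y. E x y \<and> W x y = W u v}"

lemma edge_class_cong: "W u v = W u' v' \<Longrightarrow> edge_class u v = edge_class u' v'"
  unfolding edge_class_def by simp

lemma edge_mem_edge_class: "E u v \<Longrightarrow> {u, v} \<in> edge_class u v"
  unfolding edge_class_def by blast

lemma edge_class_commute: "E u v \<Longrightarrow> edge_class u v = edge_class v u"
proof -
  have sub: "edge_class u v \<subseteq> edge_class v u" if e: "E u v" for u v
  proof
    fix f assume "f \<in> edge_class u v"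
    then obtain x y where xy: "f = {x, y}" "E x y" "W x y = W u v" unfolding edge_class_def by blast
    then have "W y x = W v u" using W_swap[OF xy(2)] W_swap[OF e] by simp
    then show "f \<in> edge_class v u"
      unfolding edge_class_def using xy edge_sym by (blast intro: insert_commute)
  qed
  assume "E u v"
  then show ?thesis using sub edge_sym by blast
qed

lemma mem_edge_class_iff:
  assumes e: "E u v" and st: "E s t"
  shows "{s, t} \<in> edge_class u v \<longleftrightarrow> (s \<in> W u v \<longleftrightarrow> t \<notin> W u v)"
proof
  assume "{s, t} \<in> edge_class u v"
  then obtain x y where xy: "{s, t} = {x, y}" "E x y" "W x y = W u v"
    unfolding edge_class_def by blast
  have "x \<in> W u v" "y \<notin> W u v"
    using W_self[OF xy(2)] W_self[OF edge_sym[OF xy(2)]] W_disjoint xy(3) by auto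
  then show "s \<in> W u v \<longleftrightarrow> t \<notin> W u v" using xy(1) by (auto simp: doubleton_eq_iff)
next
  assume a: "s \<in> W u v \<longleftrightarrow> t \<notin> W u v"
  have V: "s \<in> V" "t \<in> V" using edge_in_V st by auto
  show "{s, t} \<in> edge_class u v"
  proof (cases "s \<in> W u v")
    case True
    then have "W s t = W u v" using crossing_edge[OF e st] a W_cases[OF e V(2)] by blast
    then show ?thesis unfolding edge_class_def using st by blast
  next
    case False
    then have "W t s = W u v"
      using crossing_edge[OF e edge_sym[OF st]] a W_cases[OF e V(1)] by blast
    then show ?thesis unfolding edge_class_def using st edge_sym by (blast intro: insert_commute)
  qed
qed

lemma edge_class_eq_if_mem:
  assumes "E a b" "{a, b} \<in> edge_class u v"
  shows "edge_class a b = edge_class u v"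
proof -
  obtain x y where xy: "{a, b} = {x, y}" "E x y" "W x y = W u v"
    using assms(2) unfolding edge_class_def by blast
  then consider "a = x" "b = y" | "a = y" "b = x" by (auto simp: doubleton_eq_iff)
  then show ?thesis
    using edge_class_cong[OF xy(3)] edge_class_commute[OF xy(2)] by cases auto
qed

lemma opp_rel_sym: "sym (opp_rel E)"
proof (rule symI)
  fix f g assume "(f, g) \<in> opp_rel E"
  then obtain u v x y where "f = {u, v}" "g = {x, y}" "four_cycle E u v y x"
    unfolding opp_rel_def by blast
  then show "(g, f) \<in> opp_rel E" unfolding opp_rel_def using four_cycle_rotate by blast
qed

lemma edge_class_opp_rel_closed:
  assumes "f \<in> edge_class u v" "(f, g) \<in> opp_rel E"
  shows "g \<in> edge_class u v"
proof -
  obtain a b c e where abce: "f = {a, b}" "g = {c, e}" "four_cycle E a b e c"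
    using assms(2) unfolding opp_rel_def by blast
  have "E a b" "E c e" using abce(3) edge_sym unfolding four_cycle_def by blast+
  have "edge_class u v = edge_class a b"
    using edge_class_eq_if_mem[OF \<open>E a b\<close>] assms(1) abce(1) by simp
  also have "\<dots> = edge_class c e" using edge_class_cong[OF W_square_eq[OF abce(3)]] .
  finally show ?thesis using edge_mem_edge_class[OF \<open>E c e\<close>] abce(2) by simp
qed

lemma theta_Image_edge: assumes e: "E u v" shows "theta E `` {{u, v}} = edge_class u v"
proof
  show "theta E `` {{u, v}} \<subseteq> edge_class u v"
  proof
    fix g assume "g \<in> theta E `` {{u, v}}"
    then have "({u, v}, g) \<in> (opp_rel E)\<^sup>*" unfolding theta_def by auto
    then show "g \<in> edge_class u v"
      by induction (use edge_mem_edge_class[OF e] edge_class_opp_rel_closed in blast)+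
  qed
next
  show "edge_class u v \<subseteq> theta E `` {{u, v}}"
  proof
    fix f assume "f \<in> edge_class u v"
    then obtain x y where xy: "f = {x, y}" "E x y" "W x y = W u v" unfolding edge_class_def by blast
    have "x \<in> W u v" "y \<in> W v u"
      using W_self[OF xy(2)] W_self[OF edge_sym[OF xy(2)]] W_swap[OF xy(2)] W_swap[OF e] xy(3) by auto
    then have "({x, y}, {u, v}) \<in> (opp_rel E)\<^sup>*" using crossing_edge[OF e xy(2)] by blast
    then have "({u, v}, f) \<in> (opp_rel E)\<^sup>*"
      using sym_rtrancl[OF opp_rel_sym] xy(1) by (auto dest: symD)
    moreover have "f \<in> edges E" "{u, v} \<in> edges E" unfolding edges_def using xy e by blast+
    ultimately show "f \<in> theta E `` {{u, v}}" unfolding theta_def by blast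
  qed
qed

lemma theta_classes_iff: "F \<in> theta_classes E \<longleftrightarrow> (\<exists>u v. E u v \<and> F = edge_class u v)"
  unfolding theta_classes_def quotient_def edges_def using theta_Image_edge by blast

lemma component_subset_W:
  assumes e: "E u v" and p: "p \<in> W u v" and r: "(del_class E (edge_class u v))\<^sup>*\<^sup>* p q"
  shows "q \<in> W u v"
  using r
proof (induction rule: rtranclp_induct)
  case base
  then show ?case using p .
next
  case (step q q')
  then have "E q q'" "{q, q'} \<notin> edge_class u v" unfolding del_class_def by auto
  then show ?case using mem_edge_class_iff[OF e] step.IH by blast
qed

lemma W_subset_component:
  assumes e: "E u v" and p: "p \<in> W u v" and q: "q \<in> W u v"
  shows "(del_class E (edge_class u v))\<^sup>*\<^sup>* p q"
  using p
proof (induction "d p q" arbitrary: p)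
  case 0
  have "p \<in> V" "q \<in> V" using "0.prems" q W_subset by auto
  then have "p = q" using dist_eq_0_imp_eq "0.hyps" by simp
  then show ?case by simp
next
  case (Suc n)
  have V: "p \<in> V" "q \<in> V" using Suc.prems q W_subset by auto
  have "p \<noteq> q" using Suc.hyps(2) by auto
  then obtain p' where p': "E p p'" "d p' q + 1 = d p q"
    using exists_neighbour_closer[OF V] by blast
  have p'W: "p' \<in> W u v"
  proof (rule ccontr)
    assume "p' \<notin> W u v"
    then have "p' \<in> W v u" using W_cases[OF e] edge_in_V[OF p'(1)] by blast
    then have "W p p' = W u v" using crossing_edge[OF e p'(1) Suc.prems] by blast
    then have "q \<in> W p p'" using q by simp
    then have "d q p < d q p'" unfolding W_def by simp
    then show False using p' dist_sym[of q p] dist_sym[of q p'] by linarith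
  qed
  then have "del_class E (edge_class u v) p p'"
    unfolding del_class_def using mem_edge_class_iff[OF e p'(1)] Suc.prems p'(1) by blast
  moreover have "(del_class E (edge_class u v))\<^sup>*\<^sup>* p' q"
    using Suc.hyps p'(2) p'W by simp
  ultimately show ?case by (rule converse_rtranclp_into_rtranclp)
qed

lemma component_eq_W:
  "E u v \<Longrightarrow> p \<in> W u v \<Longrightarrow> {q \<in> V. (del_class E (edge_class u v))\<^sup>*\<^sup>* p q} = W u v"
  using component_subset_W W_subset_component W_subset by blast

lemma halfspaces_edge_class:
  assumes e: "E u v" shows "halfspaces V E (edge_class u v) = {W u v, W v u}"
proof -
  have e': "E v u" using edge_sym e .
  note comp = component_eq_W[OF e] component_eq_W[OF e', folded edge_class_commute[OF e]]
  have "{q \<in> V. (del_class E (edge_class u v))\<^sup>*\<^sup>* p q} \<in> {W u v, W v u}" if "p \<in> V" for p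
    using comp W_cases[OF e that] by blast
  moreover have "W u v = {q \<in> V. (del_class E (edge_class u v))\<^sup>*\<^sup>* u q}"
    "W v u = {q \<in> V. (del_class E (edge_class u v))\<^sup>*\<^sup>* v q}"
    using comp W_self[OF e] W_self[OF e'] by auto
  ultimately show ?thesis unfolding halfspaces_def using edge_in_V e by blast
qed

lemma separates_edge_class_iff:
  assumes e: "E u v" and "a \<in> V" "b \<in> V"
  shows "separates V E (edge_class u v) a b \<longleftrightarrow> (a \<in> W u v \<longleftrightarrow> b \<notin> W u v)"
proof -
  have "W u v \<noteq> W v u" using W_self[OF e] W_disjoint by blast
  then show ?thesis
    unfolding separates_def halfspaces_edge_class[OF e] using assms W_swap[OF e] by auto
qed

definition convex :: "'a set \<Rightarrow> bool" where
  "convex C \<longleftrightarrow> (\<forall>x\<in>C. \<forall>y\<in>C. I x y \<subseteq> C)"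

lemma convex_W: assumes e: "E u v" shows "convex (W u v)"
  unfolding convex_def
proof (intro ballI subsetI)
  fix x y z assume x: "x \<in> W u v" and y: "y \<in> W u v" and "z \<in> I x y"
  then show "z \<in> W u v"
  proof (induction "d x z" arbitrary: z)
    case 0
    have "x \<in> V" "z \<in> V" using "0.prems" W_subset in_interval_iff by auto
    then have "x = z" using dist_eq_0_imp_eq "0.hyps" by simp
    then show ?case using "0.prems" by simp
  next
    case (Suc n)
    have V: "x \<in> V" "y \<in> V" "z \<in> V" using Suc.prems W_subset in_interval_iff by auto
    have "z \<noteq> x" using Suc.hyps(2) by auto
    then obtain z' where z': "E z z'" "d z' x + 1 = d z x"
      using exists_neighbour_closer[OF V(3,1)] by blast
    have z'V: "z' \<in> V" using edge_in_V z' by auto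
    have xz': "d x z' = n" using z' Suc.hyps(2) dist_sym[of x z'] dist_sym[of x z] by simp
    have "d z' y \<le> 1 + d z y" using dist_triangle[OF z'V V(3,2)] dist_edge[OF edge_sym[OF z'(1)]] by simp
    moreover have "d x y \<le> d x z' + d z' y" using dist_triangle z'V V by blast
    moreover have "d x z + d z y = d x y" using Suc.prems(3) in_interval_iff by auto
    ultimately have "z' \<in> I x y" and z'y: "d z' y = d z y + 1"
      using xz' Suc.hyps(2) z'V in_interval_iff by auto
    then have z'W: "z' \<in> W u v" using Suc.hyps(1) xz' Suc.prems by blast
    show "z \<in> W u v"
    proof (rule ccontr)
      assume "z \<notin> W u v"
      then have "W z' z = W u v"
        using crossing_edge[OF e edge_sym[OF z'(1)] z'W] W_cases[OF e V(3)] by blast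
      then have "y \<in> W z' z" using Suc.prems(2) by simp
      then have "d y z' < d y z" unfolding W_def by simp
      then show False using z'y dist_sym[of y z'] dist_sym[of y z] by linarith
    qed
  qed
qed

lemma convex_gated:
  assumes C: "C \<subseteq> V" "C \<noteq> {}" "convex C"
  shows "gated V E C"
  unfolding gated_def
proof
  fix v assume v: "v \<in> V"
  \<comment> \<open>the gate is a vertex of C nearest to v\<close>
  obtain g where g: "g \<in> C" "\<And>y. y \<in> C \<Longrightarrow> d v g \<le> d v y"
    using C(2) ex_has_least_nat[of "\<lambda>x. x \<in> C" _ "d v"] by blast
  show "\<exists>g\<in>C. \<forall>x\<in>C. g \<in> I v x"
  proof (intro bexI[OF _ g(1)] ballI)
    fix x assume x: "x \<in> C"
    have V: "g \<in> V" "x \<in> V" using g x C by auto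
    obtain m where m: "m \<in> I v g" "m \<in> I g x" "m \<in> I x v" using median_exists[OF v V] .
    have mC: "m \<in> C" using C(3) g(1) x m(2) unfolding convex_def by blast
    then have "d m g = 0" using m(1) g(2) in_interval_iff by fastforce
    then have "m = g" using dist_eq_0_imp_eq C(1) mC V by blast
    then show "g \<in> I v x" using m(3) in_interval_iff dist_sym[of x g] dist_sym[of g v] dist_sym[of x v]
      by auto
  qed
qed

lemma edge_class_at_vertex:
  assumes "F \<in> theta_classes E" "e \<in> F" "v0 \<in> e"
  obtains w where "E v0 w" "F = edge_class v0 w"
proof -
  obtain u v where uv: "E u v" "F = edge_class u v" using assms(1) theta_classes_iff by blast
  then obtain x y where xy: "e = {x, y}" "E x y" using assms(2) unfolding edge_class_def by blast
  then have "F = edge_class x y" using edge_class_eq_if_mem assms(2) uv(2) by simp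
  moreover have "v0 = x \<or> v0 = y" using assms(3) xy(1) by auto
  ultimately show thesis using that xy(2) edge_sym[OF xy(2)] edge_class_commute[OF xy(2)] by blast
qed

lemma edge_class_inj_at_vertex:
  assumes "E v0 a" "E v0 w" "edge_class v0 a = edge_class v0 w"
  shows "a = w"
proof (rule ccontr)
  assume "a \<noteq> w"
  then have "a \<in> W v0 w" using W_if_neighbour[OF assms(2) edge_sym[OF assms(1)]] by blast
  moreover have "{v0, a} \<in> edge_class v0 w" using edge_mem_edge_class[OF assms(1)] assms(3) by simp
  then have "a \<notin> W v0 w" using mem_edge_class_iff[OF assms(2,1)] W_self[OF assms(2)] by simp
  ultimately show False by simp
qed

lemma separates_at_vertex_iff:
  assumes "E v0 w" "v \<in> V"
  shows "separates V E (edge_class v0 w) v0 v \<longleftrightarrow> v \<in> W w v0"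
  using separates_edge_class_iff[OF assms(1) _ assms(2)] W_self[OF assms(1)] W_swap[OF assms(1)]
    edge_in_V[OF assms(1)] assms(2) by auto

lemma ladder_set_eq:
  assumes "v \<in> V"
  shows "ladder_set V E v0 v = {edge_class v0 w | w. E v0 w \<and> v \<in> W w v0}"
proof -
  have "F \<in> ladder_set V E v0 v \<longleftrightarrow> (\<exists>w. F = edge_class v0 w \<and> E v0 w \<and> v \<in> W w v0)" for F
  proof
    assume "F \<in> ladder_set V E v0 v"
    then have F: "F \<in> theta_classes E" "separates V E F v0 v" "\<exists>e\<in>F. v0 \<in> e"
      unfolding ladder_set_def by auto
    then obtain w where "E v0 w" "F = edge_class v0 w" using edge_class_at_vertex by blast
    then show "\<exists>w. F = edge_class v0 w \<and> E v0 w \<and> v \<in> W w v0"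
      using F(2) separates_at_vertex_iff assms by blast
  next
    assume "\<exists>w. F = edge_class v0 w \<and> E v0 w \<and> v \<in> W w v0"
    then obtain w where w: "F = edge_class v0 w" "E v0 w" "v \<in> W w v0" by blast
    then have "F \<in> theta_classes E" "\<exists>e\<in>F. v0 \<in> e"
      using theta_classes_iff edge_mem_edge_class by blast+
    then show "F \<in> ladder_set V E v0 v"
      unfolding ladder_set_def using w separates_at_vertex_iff assms by blast
  qed
  then show ?thesis by blast
qed

definition sector :: "'a \<Rightarrow> 'a set \<Rightarrow> 'a set" where
  "sector v0 A = {v \<in> V. \<forall>w. E v0 w \<longrightarrow> (v \<in> W w v0 \<longleftrightarrow> w \<in> A)}"

lemma ladder_vertices_eq_sector:
  assumes "L \<noteq> {}" "L \<subseteq> theta_classes E" "\<forall>F\<in>L. \<exists>e\<in>F. v0 \<in> e"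
  shows "{v \<in> V - {v0}. ladder_set V E v0 v = L} = sector v0 {w. E v0 w \<and> edge_class v0 w \<in> L}"
    (is "?S = sector v0 ?A")
proof (intro set_eqI iffI)
  fix v assume "v \<in> ?S"
  then have v: "v \<in> V" "L = {edge_class v0 w | w. E v0 w \<and> v \<in> W w v0}" using ladder_set_eq by auto
  have "v \<in> W w v0 \<longleftrightarrow> w \<in> ?A" if "E v0 w" for w
    using v(2) edge_class_inj_at_vertex that by blast
  then show "v \<in> sector v0 ?A" unfolding sector_def using v(1) by blast
next
  fix v assume v: "v \<in> sector v0 ?A"
  have "L \<subseteq> {edge_class v0 w | w. E v0 w \<and> edge_class v0 w \<in> L}"
  proof
    fix F assume "F \<in> L"
    moreover obtain e where "e \<in> F" "v0 \<in> e" using assms(3) \<open>F \<in> L\<close> by blast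
    ultimately obtain w where "E v0 w" "F = edge_class v0 w"
      using assms(2) edge_class_at_vertex by blast
    then show "F \<in> {edge_class v0 w | w. E v0 w \<and> edge_class v0 w \<in> L}" using \<open>F \<in> L\<close> by blast
  qed
  then have "L = {edge_class v0 w | w. E v0 w \<and> edge_class v0 w \<in> L}" by blast
  also have "\<dots> = {edge_class v0 w | w. E v0 w \<and> v \<in> W w v0}"
  proof -
    have "\<And>w. E v0 w \<Longrightarrow> v \<in> W w v0 \<longleftrightarrow> edge_class v0 w \<in> L" using v unfolding sector_def by blast
    then show ?thesis by blast
  qed
  also have "\<dots> = ladder_set V E v0 v" using ladder_set_eq v unfolding sector_def by blast
  finally have L: "ladder_set V E v0 v = L" ..
  obtain F where "F \<in> L" using assms(1) by blast
  then obtain w where "E v0 w" "v \<in> W w v0" using L ladder_set_eq v unfolding sector_def by blast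
  then have "v \<noteq> v0" using W_self W_disjoint by blast
  then show "v \<in> ?S" using v L unfolding sector_def by blast
qed

lemma convex_sector: "convex (sector v0 A)"
  unfolding convex_def
proof (intro ballI subsetI)
  fix x y z assume xy: "x \<in> sector v0 A" "y \<in> sector v0 A" and z: "z \<in> I x y"
  have "z \<in> W w v0 \<longleftrightarrow> w \<in> A" if e: "E v0 w" for w
  proof (cases "w \<in> A")
    case True
    then have "x \<in> W w v0" "y \<in> W w v0" using xy e unfolding sector_def by blast+
    then show ?thesis using convex_W[OF edge_sym[OF e]] z True unfolding convex_def by blast
  next
    case False
    then have "x \<in> W v0 w" "y \<in> W v0 w" using xy e W_swap[OF e] unfolding sector_def by auto
    then have "z \<in> W v0 w" using convex_W[OF e] z unfolding convex_def by blast
    then show ?thesis using W_disjoint False by blast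
  qed
  then show "z \<in> sector v0 A" using z in_interval_iff unfolding sector_def by blast
qed

lemma orthogonal_at_vertex_common_far_side:
  assumes e: "E v0 a" "E v0 w" "a \<noteq> w"
    and orth: "orthogonal E (edge_class v0 a) (edge_class v0 w)"
  obtains p where "p \<in> W a v0" "p \<in> W w v0"
proof -
  obtain u v y x where c: "four_cycle E u v y x"
    and m: "{u, v} \<in> edge_class v0 a" "{x, y} \<in> edge_class v0 a"
      "{u, x} \<in> edge_class v0 w" "{v, y} \<in> edge_class v0 w"
    using orth unfolding orthogonal_def by blast
  have ce: "E u v" "E x y" "E u x" "E v y" using c edge_sym unfolding four_cycle_def by blast+
  have "edge_class v0 a \<noteq> edge_class v0 w" using edge_class_inj_at_vertex e by blast
  then have "{s, t} \<notin> edge_class v0 a" if "E s t" "{s, t} \<in> edge_class v0 w" for s t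
    using edge_class_eq_if_mem that by metis
  then have "{u, x} \<notin> edge_class v0 a" "{v, y} \<notin> edge_class v0 a"
    "{u, v} \<notin> edge_class v0 w" "{x, y} \<notin> edge_class v0 w"
    using ce m by (metis edge_class_eq_if_mem)+
  moreover note mem_a = mem_edge_class_iff[OF edge_sym[OF e(1)], folded edge_class_commute[OF e(1)]]
    and mem_w = mem_edge_class_iff[OF edge_sym[OF e(2)], folded edge_class_commute[OF e(2)]]
  ultimately have "(u \<in> W a v0 \<longleftrightarrow> v \<notin> W a v0) \<and> (x \<in> W a v0 \<longleftrightarrow> y \<notin> W a v0)
      \<and> (u \<in> W a v0 \<longleftrightarrow> x \<in> W a v0) \<and> (u \<in> W w v0 \<longleftrightarrow> x \<notin> W w v0)
      \<and> (v \<in> W w v0 \<longleftrightarrow> y \<notin> W w v0) \<and> (u \<in> W w v0 \<longleftrightarrow> v \<in> W w v0)"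
    using ce m by (simp add: mem_a mem_w)
  then show thesis using that by blast
qed

lemma square_at_vertex:
  assumes e: "E v0 a" "E v0 w" "a \<noteq> w" and p: "p \<in> W a v0" "p \<in> W w v0"
  obtains q where "E a q" "E w q" "q \<noteq> v0"
proof -
  have pV: "p \<in> V" using p W_subset by auto
  have "d p v0 = d p a + 1" "d p w = d p a"
    using p dist_neighbours_cases[OF e(1) pV] dist_neighbours_cases[OF e(2) pV] unfolding W_def by auto
  then obtain q where q: "E a q" "E w q" "d p q + 1 = d p a"
    using quadrangle[OF pV edge_sym[OF e(1)] edge_sym[OF e(2)] e(3) refl] by blast
  moreover have "q \<noteq> v0" using q(3) \<open>d p v0 = d p a + 1\<close> by auto
  ultimately show thesis using that by blast
qed

lemma sector_insert_nonempty:
  assumes a: "E v0 a" and c: "c \<in> sector v0 A"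
    and squares: "\<And>b. b \<in> A \<Longrightarrow> b \<noteq> a \<Longrightarrow> \<exists>q. E a q \<and> E b q \<and> q \<noteq> v0"
  shows "sector v0 (insert a A) \<noteq> {}"
proof -
  have cV: "c \<in> V" using c unfolding sector_def by blast
  have "gated V E (W a v0)"
    using convex_gated[OF W_subset _ convex_W] W_self edge_sym[OF a] by blast
  \<comment> \<open>the gate of c in the halfspace of a moves c across the class of v0 a and no other class\<close>
  then obtain g where g: "g \<in> W a v0" "\<And>x. x \<in> W a v0 \<Longrightarrow> g \<in> I c x"
    unfolding gated_def using cV by blast
  have "g \<in> W w v0 \<longleftrightarrow> w \<in> insert a A" if w: "E v0 w" for w
  proof -
    consider "w = a" | "w \<noteq> a" "w \<in> A" | "w \<notin> insert a A" by blast
    then show ?thesis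
    proof cases
      case 1
      then show ?thesis using g(1) by simp
    next
      case 2
      then obtain q where q: "E a q" "E w q" "q \<noteq> v0" using squares by blast
      have "g \<in> I c q" using g(2) W_if_neighbour[OF edge_sym[OF a] edge_sym[OF q(1)] q(3)] by blast
      moreover have "q \<in> W w v0" using W_if_neighbour[OF edge_sym[OF w] edge_sym[OF q(2)] q(3)] .
      moreover have "c \<in> W w v0" using c 2 w unfolding sector_def by blast
      ultimately have "g \<in> W w v0" using convex_W[OF edge_sym[OF w]] unfolding convex_def by blast
      then show ?thesis using 2 by simp
    next
      case 3
      have "g \<in> I c a" using g(2) W_self[OF edge_sym[OF a]] by blast
      moreover have "a \<in> W v0 w" using W_if_neighbour[OF w edge_sym[OF a]] 3 by blast
      moreover have "c \<in> W v0 w" using c 3 w W_swap[OF w] cV unfolding sector_def by auto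
      ultimately have "g \<in> W v0 w" using convex_W[OF w] unfolding convex_def by blast
      then show ?thesis using W_disjoint 3 by blast
    qed
  qed
  then have "g \<in> sector v0 (insert a A)" using g(1) W_subset unfolding sector_def by blast
  then show ?thesis by blast
qed

lemma sector_nonempty:
  assumes "v0 \<in> V" "\<forall>a\<in>A. E v0 a"
    and "\<forall>a\<in>A. \<forall>b\<in>A. a \<noteq> b \<longrightarrow> (\<exists>q. E a q \<and> E b q \<and> q \<noteq> v0)"
  shows "sector v0 A \<noteq> {}"
proof -
  have "finite A" using finite_subset[OF _ finite_V] assms(2) edge_in_V by blast
  then show ?thesis
    using assms(2,3)
  proof (induction A rule: finite_induct)
    case empty
    have "v0 \<notin> W w v0" if "E v0 w" for w using W_disjoint[OF W_self[OF that]] .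
    then have "v0 \<in> sector v0 {}" using assms(1) unfolding sector_def by blast
    then show ?case by blast
  next
    case (insert a A)
    then obtain c where c: "c \<in> sector v0 A" by blast
    show ?case
      by (rule sector_insert_nonempty[OF _ c]) (use insert.prems in auto)
  qed
qed

end

theorem mainTheorem11:
  fixes V :: "'a set" and E :: "'a \<Rightarrow> 'a \<Rightarrow> bool" and v0 :: 'a and L :: "'a set set set"
  assumes "in_U3 V E"
    and "card V \<ge> 3"
    and "v0 \<in> V"
    and "\<forall>F\<in>theta_classes E. \<forall>H. majority_halfspace V E F H \<longrightarrow> v0 \<in> H"
    and "L \<noteq> {}"
    and "POF E L"
    and "\<forall>F\<in>L. \<exists>e\<in>F. v0 \<in> e"
  shows "{v \<in> V - {v0}. ladder_set V E v0 v = L} \<noteq> {} \<and>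
         gated V E {v \<in> V - {v0}. ladder_set V E v0 v = L}"
proof -
  interpret median V E using assms(1) unfolding in_U3_def by unfold_locales blast
  define A where "A = {w. E v0 w \<and> edge_class v0 w \<in> L}"
  have "L \<subseteq> theta_classes E" using assms(6) unfolding POF_def by blast
  then have S: "{v \<in> V - {v0}. ladder_set V E v0 v = L} = sector v0 A"
    unfolding A_def by (rule ladder_vertices_eq_sector[OF assms(5) _ assms(7)])
  have squares: "\<exists>q. E a q \<and> E b q \<and> q \<noteq> v0" if ab: "a \<in> A" "b \<in> A" "a \<noteq> b" for a b
  proof -
    have a: "E v0 a" "edge_class v0 a \<in> L" and b: "E v0 b" "edge_class v0 b \<in> L"
      using ab(1,2) unfolding A_def by auto
    have "edge_class v0 a \<noteq> edge_class v0 b" using edge_class_inj_at_vertex[OF a(1) b(1)] ab(3) by blast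
    then have "orthogonal E (edge_class v0 a) (edge_class v0 b)"
      using assms(6) a(2) b(2) unfolding POF_def by blast
    then obtain p where "p \<in> W a v0" "p \<in> W b v0"
      using orthogonal_at_vertex_common_far_side[OF a(1) b(1) ab(3)] by blast
    then show ?thesis using square_at_vertex[OF a(1) b(1) ab(3)] by blast
  qed
  have "sector v0 A \<noteq> {}"
    by (rule sector_nonempty) (use assms(3) squares in \<open>auto simp: A_def\<close>)
  moreover have "sector v0 A \<subseteq> V" unfolding sector_def by blast
  ultimately show ?thesis using S convex_gated convex_sector by simp
qed

end
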